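(* There exist $b_1,b_2\in L^\infty_{loc}(\mathbb{R})$ such that $S_2(b_1,b_2)<\infty$ and $T_2(b_1,b_2)<\infty$, but $S_{2+\varepsilon}(b_1,b_2)=\infty$ and $T_{2+\varepsilon}(b_1,b_2)=\infty$ for every $\varepsilon>0$.
   Context: For $r>0$, with $\langle g\rangle_I=\frac1{|I|}\int_Ig$ and suprema over all intervals $I\subset\mathbb{R}$: $S_r(b_1,b_2)=\sup_I\big(\frac1{|I|}\int_I|b_1-\langle b_1\rangle_I|^r\big)^{1/r}\big(\frac1{|I|}\int_I|b_2-\langle b_2\rangle_I|^r\big)^{1/r}$ and $T_r(b_1,b_2)=\sup_I\big(\frac1{|I|}\int_I|b_1-\langle b_1\rangle_I|^r|b_2-\langle b_2\rangle_I|^r\big)^{1/r}$. *)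

theory Defs
  imports "HOL-Analysis.Analysis"
begin

definition Linf_loc :: "(real \<Rightarrow> real) \<Rightarrow> bool" where
  "Linf_loc f \<longleftrightarrow> f \<in> borel_measurable lborel \<and>
     (\<forall>K. compact K \<longrightarrow> (\<exists>C. AE x in lborel. x \<in> K \<longrightarrow> \<bar>f x\<bar> \<le> C))"

definition avg :: "(real \<Rightarrow> real) \<Rightarrow> real \<Rightarrow> real \<Rightarrow> real" where
  "avg f a b = (LBINT x:{a..b}. f x) / (b - a)"

definition osc :: "real \<Rightarrow> (real \<Rightarrow> real) \<Rightarrow> real \<Rightarrow> real \<Rightarrow> real" where
  "osc r f a b = ((LBINT x:{a..b}. \<bar>f x - avg f a b\<bar> powr r) / (b - a)) powr (1 / r)"

definition S_r :: "real \<Rightarrow> (real \<Rightarrow> real) \<Rightarrow> (real \<Rightarrow> real) \<Rightarrow> ereal" where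
  "S_r r b1 b2 = (SUP I \<in> {(a, b). a < b}. ereal (osc r b1 (fst I) (snd I) * osc r b2 (fst I) (snd I)))"

definition T_r :: "real \<Rightarrow> (real \<Rightarrow> real) \<Rightarrow> (real \<Rightarrow> real) \<Rightarrow> ereal" where
  "T_r r b1 b2 = (SUP I \<in> {(a, b). a < b}. ereal
     (((LBINT x:{fst I..snd I}. \<bar>b1 x - avg b1 (fst I) (snd I)\<bar> powr r *
                                \<bar>b2 x - avg b2 (fst I) (snd I)\<bar> powr r)
        / (snd I - fst I)) powr (1 / r)))"

end

theory Submission
  imports Defs "HOL-Real_Asymp.Real_Asymp"
begin

(* Take for b1 a train of spikes, one in each unit cell [k, k + 1] with k >= 1, of height
   sqrt (k + 8) and width 1 / (k + 8), and b2 x = sin (2 pi x).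

   Every spike has unit L^2-mass, so the mean of b1^2 over an interval I is at most
   (|I| + 2) / |I|, while b2 deviates from its mean on I by at most min 2 (2 pi |I|): the
   Lipschitz bound compensates the blow-up on short intervals. Hence at exponent 2 both the
   product of the oscillations and the oscillation of the product stay below 4 pi.

   For r > 2 the L^r-mass of the k-th spike is (k + 8) powr (r/2 - 1). On [k, k + 1] the
   wave has mean zero and is at least 1/2 on the spike, so both quantities over that cell
   are at least (k + 8) powr (1/2 - 1/r) / 24, which is unbounded in k. *)

section \<open>Bounded Borel functions on compact intervals\<close>

lemma bounded_borel_set_integrable_Icc:
  fixes f :: "real \<Rightarrow> real"
  assumes "f \<in> borel_measurable borel" and "bounded (f ` {a..b})"
  shows "set_integrable lborel {a..b} f"
proof -
  obtain B where "\<forall>x\<in>{a..b}. \<bar>f x\<bar> \<le> B"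
    using assms(2) by (auto simp: bounded_real)
  then show ?thesis
    unfolding set_integrable_def
    by (intro integrableI_bounded_set_indicator[where B = B])
       (auto simp: emeasure_lborel_Icc_eq assms(1))
qed

lemma bounded_borel_integral_Icc:
  fixes f :: "real \<Rightarrow> real"
  assumes "f \<in> borel_measurable borel" and "bounded (f ` {a..b})"
  shows "f integrable_on {a..b}" and "(LBINT x:{a..b}. f x) = integral {a..b} f"
  using set_borel_integral_eq_integral[OF bounded_borel_set_integrable_Icc[OF assms]] by auto

lemma avg_eq_integral:
  assumes "f \<in> borel_measurable borel" and "bounded (f ` {a..b})"
  shows "avg f a b = integral {a..b} f / (b - a)"
  unfolding avg_def bounded_borel_integral_Icc(2)[OF assms] ..

lemma bounded_abs_sub_comp:
  fixes f :: "'a \<Rightarrow> real"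
  assumes "bounded (f ` S)"
  shows "bounded ((\<lambda>x. \<bar>f x - c\<bar>) ` S)"
proof -
  obtain B where "\<forall>x\<in>S. \<bar>f x\<bar> \<le> B"
    using assms by (auto simp: bounded_real)
  then have "\<forall>x\<in>S. \<bar>\<bar>f x - c\<bar>\<bar> \<le> B + \<bar>c\<bar>"
    by force
  then show ?thesis by (auto simp: bounded_real)
qed

lemma bounded_mult_comp:
  fixes f g :: "'a \<Rightarrow> real"
  assumes "bounded (f ` S)" and "bounded (g ` S)"
  shows "bounded ((\<lambda>x. f x * g x) ` S)"
proof -
  obtain B C where "\<forall>x\<in>S. \<bar>f x\<bar> \<le> B" "\<forall>x\<in>S. \<bar>g x\<bar> \<le> C"
    using assms by (auto simp: bounded_real)
  then have "\<forall>x\<in>S. \<bar>f x * g x\<bar> \<le> B * C"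
    by (auto simp: abs_mult intro!: mult_mono)
  then show ?thesis by (auto simp: bounded_real)
qed

lemma Linf_locI:
  assumes "f \<in> borel_measurable borel" and "\<And>a b. bounded (f ` {a..b})"
  shows "Linf_loc f"
  unfolding Linf_loc_def
proof (intro conjI allI impI)
  show "f \<in> borel_measurable lborel" using assms(1) by simp
  fix K :: "real set"
  assume "compact K"
  then obtain R where "K \<subseteq> {-R..R}"
    using compact_imp_bounded bounded_subset_cbox_symmetric by (metis cbox_interval)
  moreover obtain C where "\<forall>x\<in>{-R..R}. \<bar>f x\<bar> \<le> C"
    using assms(2)[of "-R" R] by (auto simp: bounded_real)
  ultimately show "\<exists>C. AE x in lborel. x \<in> K \<longrightarrow> \<bar>f x\<bar> \<le> C"
    by (intro exI AE_I2) blast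
qed

lemma integral_sq_sub_mean_le:
  fixes f :: "real \<Rightarrow> real"
  assumes "f integrable_on {a..b}" and "(\<lambda>x. f x ^ 2) integrable_on {a..b}" and "a < b"
  shows "integral {a..b} (\<lambda>x. (f x - integral {a..b} f / (b - a)) ^ 2) \<le> integral {a..b} (\<lambda>x. f x ^ 2)"
proof -
  define c where "c = integral {a..b} f / (b - a)"
  have "((\<lambda>x. f x ^ 2 - 2 * c * f x + c ^ 2) has_integral
      integral {a..b} (\<lambda>x. f x ^ 2) - 2 * c * integral {a..b} f + (b - a) * c ^ 2) {a..b}"
    using has_integral_const_real[of "c ^ 2" a b] assms
    by (intro has_integral_add has_integral_diff has_integral_mult_right integrable_integral) auto
  moreover have "(\<lambda>x. f x ^ 2 - 2 * c * f x + c ^ 2) = (\<lambda>x. (f x - c) ^ 2)"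
    by (auto simp: power2_eq_square algebra_simps)
  moreover have "integral {a..b} f = c * (b - a)"
    unfolding c_def using \<open>a < b\<close> by simp
  ultimately have "integral {a..b} (\<lambda>x. (f x - c) ^ 2) = integral {a..b} (\<lambda>x. f x ^ 2) - (b - a) * c ^ 2"
    by (auto dest!: integral_unique simp: power2_eq_square algebra_simps)
  then show ?thesis
    unfolding c_def[symmetric] using \<open>a < b\<close> by simp
qed

lemma abs_sub_mean_le:
  fixes f :: "real \<Rightarrow> real"
  assumes "f integrable_on {a..b}" and "a < b" and "\<And>y. y \<in> {a..b} \<Longrightarrow> \<bar>f x - f y\<bar> \<le> D"
  shows "\<bar>f x - integral {a..b} f / (b - a)\<bar> \<le> D"
proof -
  have "integral {a..b} (\<lambda>y. f x - D) \<le> integral {a..b} f"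
    and "integral {a..b} f \<le> integral {a..b} (\<lambda>y. f x + D)"
    using assms(1,3) by (intro integral_le integrable_const_ivl; force simp: abs_le_iff)+
  moreover have "integral {a..b} (\<lambda>y. f x - D) = (b - a) * (f x - D)"
    and "integral {a..b} (\<lambda>y. f x + D) = (b - a) * (f x + D)"
    using \<open>a < b\<close> by simp_all
  ultimately show ?thesis
    using \<open>a < b\<close> by (simp add: abs_le_iff field_simps)
qed

section \<open>Oscillations as power means\<close>

definition power_mean :: "real \<Rightarrow> (real \<Rightarrow> real) \<Rightarrow> real \<Rightarrow> real \<Rightarrow> real" where
  "power_mean r h a b = ((LBINT x:{a..b}. h x powr r) / (b - a)) powr (1 / r)"

definition joint_osc :: "real \<Rightarrow> (real \<Rightarrow> real) \<Rightarrow> (real \<Rightarrow> real) \<Rightarrow> real \<Rightarrow> real \<Rightarrow> real" where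
  "joint_osc r f g a b =
     ((LBINT x:{a..b}. \<bar>f x - avg f a b\<bar> powr r * \<bar>g x - avg g a b\<bar> powr r) / (b - a)) powr (1 / r)"

lemma osc_eq_power_mean: "osc r f a b = power_mean r (\<lambda>x. \<bar>f x - avg f a b\<bar>) a b"
  unfolding osc_def power_mean_def ..

lemma joint_osc_eq_power_mean:
  "joint_osc r f g a b = power_mean r (\<lambda>x. \<bar>f x - avg f a b\<bar> * \<bar>g x - avg g a b\<bar>) a b"
  unfolding joint_osc_def power_mean_def by (simp add: powr_mult)

lemma T_r_eq_SUP_joint_osc: "T_r r f g = (SUP I \<in> {(a, b). a < b}. ereal (joint_osc r f g (fst I) (snd I)))"
  unfolding T_r_def joint_osc_def ..

lemma osc_nonneg: "0 \<le> osc r f a b"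
  unfolding osc_def by simp

lemma power_mean_eq_integral:
  assumes h: "h \<in> borel_measurable borel" "bounded (h ` {a..b})" "\<And>x. x \<in> {a..b} \<Longrightarrow> 0 \<le> h x"
    and r: "0 < r"
  shows "(\<lambda>x. h x powr r) integrable_on {a..b}"
    and "power_mean r h a b = (integral {a..b} (\<lambda>x. h x powr r) / (b - a)) powr (1 / r)"
proof -
  obtain B where B: "\<forall>x\<in>{a..b}. \<bar>h x\<bar> \<le> B"
    using h(2) by (auto simp: bounded_real)
  have "\<forall>x\<in>{a..b}. \<bar>h x powr r\<bar> \<le> B powr r"
    using B h(3) r by (auto intro: powr_mono2)
  then have "bounded ((\<lambda>x. h x powr r) ` {a..b})"
    by (auto simp: bounded_real)
  moreover have "(\<lambda>x. h x powr r) \<in> borel_measurable borel"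
    using h(1) by measurable
  ultimately show "(\<lambda>x. h x powr r) integrable_on {a..b}"
    and "power_mean r h a b = (integral {a..b} (\<lambda>x. h x powr r) / (b - a)) powr (1 / r)"
    using bounded_borel_integral_Icc unfolding power_mean_def by auto
qed

lemma power_mean_const:
  assumes "a < b" and "0 \<le> M" and "0 < r"
  shows "power_mean r (\<lambda>_. M) a b = M"
proof -
  have "bounded ((\<lambda>_. M) ` {a..b})"
    by (auto simp: bounded_real)
  then show ?thesis
    using power_mean_eq_integral(2)[of "\<lambda>_. M" a b r] assms by (simp add: powr_powr)
qed

lemma power_mean_cmult:
  assumes "0 \<le> c" and "\<And>x. x \<in> {a..b} \<Longrightarrow> 0 \<le> h x" and "0 < r" and "a < b"
  shows "power_mean r (\<lambda>x. c * h x) a b = c * power_mean r h a b"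
proof -
  define I where "I = (LBINT x:{a..b}. h x powr r)"
  have "(LBINT x:{a..b}. (c * h x) powr r) = (LBINT x:{a..b}. c powr r * h x powr r)"
    using assms(1,2) by (intro set_lebesgue_integral_cong) (auto simp: powr_mult)
  also have "\<dots> = c powr r * I"
    unfolding I_def by (rule set_integral_mult_right)
  finally have "power_mean r (\<lambda>x. c * h x) a b = (c powr r * (I / (b - a))) powr (1 / r)"
    unfolding power_mean_def by simp
  also have "\<dots> = c * (I / (b - a)) powr (1 / r)"
  proof -
    have "0 \<le> I"
      unfolding I_def set_lebesgue_integral_def by (rule integral_nonneg_AE) auto
    then show ?thesis
      using assms powr_mult[of "c powr r" "I / (b - a)" "1 / r"] by (simp add: powr_powr)
  qed
  also have "\<dots> = c * power_mean r h a b"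
    unfolding power_mean_def I_def ..
  finally show ?thesis .
qed

lemma power_mean_mono:
  assumes h: "h \<in> borel_measurable borel" "bounded (h ` {a..b})" "\<And>x. x \<in> {a..b} \<Longrightarrow> 0 \<le> h x"
    and g: "g \<in> borel_measurable borel" "bounded (g ` {a..b})"
    and le: "\<And>x. x \<in> {a..b} \<Longrightarrow> h x \<le> g x"
    and "0 < r" and "a < b"
  shows "power_mean r h a b \<le> power_mean r g a b"
proof -
  have g_nonneg: "0 \<le> g x" if "x \<in> {a..b}" for x
    using h(3) le that by (meson order.trans)
  note h_int = power_mean_eq_integral[OF h \<open>0 < r\<close>]
    and g_int = power_mean_eq_integral[OF g g_nonneg \<open>0 < r\<close>]
  have "integral {a..b} (\<lambda>x. h x powr r) \<le> integral {a..b} (\<lambda>x. g x powr r)"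
    using h_int(1) g_int(1) le h(3) \<open>0 < r\<close> by (intro integral_le powr_mono2) auto
  moreover have "0 \<le> integral {a..b} (\<lambda>x. h x powr r)"
    using h_int(1) by (metis integral_nonneg powr_ge_zero)
  ultimately have "(integral {a..b} (\<lambda>x. h x powr r) / (b - a)) powr (1 / r)
      \<le> (integral {a..b} (\<lambda>x. g x powr r) / (b - a)) powr (1 / r)"
    using \<open>0 < r\<close> \<open>a < b\<close> by (auto intro!: powr_mono2 divide_right_mono)
  then show ?thesis
    using h_int(2) g_int(2) by simp
qed

lemma power_mean_ge_on_subinterval:
  assumes h: "h \<in> borel_measurable borel" "bounded (h ` {a..b})" "\<And>x. x \<in> {a..b} \<Longrightarrow> 0 \<le> h x"
    and pq: "a \<le> p" "p \<le> q" "q \<le> b"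
    and ge: "\<And>x. x \<in> {p..q} \<Longrightarrow> m \<le> h x"
    and "0 \<le> m" and "0 < r" and "a < b"
  shows "((q - p) / (b - a)) powr (1 / r) * m \<le> power_mean r h a b"
proof -
  note h_int = power_mean_eq_integral[OF h \<open>0 < r\<close>]
  have sub: "{p..q} \<subseteq> {a..b}"
    using pq by auto
  have "(q - p) * m powr r = integral {p..q} (\<lambda>x. m powr r)"
    using pq by simp
  also have "\<dots> \<le> integral {p..q} (\<lambda>x. h x powr r)"
    using integrable_subinterval_real[OF h_int(1) sub] ge \<open>0 \<le> m\<close> \<open>0 < r\<close>
    by (intro integral_le powr_mono2) auto
  also have "\<dots> \<le> integral {a..b} (\<lambda>x. h x powr r)"
    using integrable_subinterval_real[OF h_int(1) sub] h_int(1) sub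
    by (intro integral_subset_le) auto
  finally have "((q - p) * m powr r / (b - a)) powr (1 / r)
      \<le> (integral {a..b} (\<lambda>x. h x powr r) / (b - a)) powr (1 / r)"
    using pq \<open>0 < r\<close> \<open>a < b\<close> by (intro powr_mono2 divide_right_mono) auto
  moreover have "((q - p) * m powr r / (b - a)) powr (1 / r) = ((q - p) / (b - a)) powr (1 / r) * m"
    using pq \<open>0 \<le> m\<close> \<open>0 < r\<close> \<open>a < b\<close> powr_mult[of "(q - p) / (b - a)" "m powr r" "1 / r"]
    by (simp add: powr_powr)
  ultimately show ?thesis
    using h_int(2) by simp
qed

lemma power_mean_two:
  assumes h: "h \<in> borel_measurable borel" "bounded (h ` {a..b})" "\<And>x. x \<in> {a..b} \<Longrightarrow> 0 \<le> h x"
    and "a < b"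
  shows "power_mean 2 h a b = sqrt (integral {a..b} (\<lambda>x. h x ^ 2) / (b - a))"
proof -
  have "integral {a..b} (\<lambda>x. h x powr 2) = integral {a..b} (\<lambda>x. h x ^ 2)"
    using h(3) by (intro integral_cong) (simp add: powr_numeral)
  moreover have "0 \<le> integral {a..b} (\<lambda>x. h x powr 2)"
    using power_mean_eq_integral(1)[OF h] by (metis integral_nonneg powr_ge_zero zero_less_numeral)
  ultimately show ?thesis
    using power_mean_eq_integral(2)[OF h, of 2] \<open>a < b\<close> by (simp add: powr_half_sqrt)
qed

lemma osc_le_if_abs_sub_avg_le:
  assumes [measurable]: "g \<in> borel_measurable borel" and "bounded (g ` {a..b})"
    and le: "\<And>x. x \<in> {a..b} \<Longrightarrow> \<bar>g x - avg g a b\<bar> \<le> M"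
    and "0 < r" and "a < b"
  shows "osc r g a b \<le> M"
proof -
  have "0 \<le> M"
    using le[of a] \<open>a < b\<close> by simp
  have "osc r g a b \<le> power_mean r (\<lambda>_. M) a b"
    unfolding osc_eq_power_mean using assms
    by (intro power_mean_mono bounded_abs_sub_comp) (auto simp: bounded_real)
  then show ?thesis
    using power_mean_const[OF \<open>a < b\<close> \<open>0 \<le> M\<close> \<open>0 < r\<close>] by simp
qed

lemma joint_osc_le_if_abs_sub_avg_le:
  assumes [measurable]: "f \<in> borel_measurable borel" "g \<in> borel_measurable borel"
    and "bounded (f ` {a..b})" "bounded (g ` {a..b})"
    and le: "\<And>x. x \<in> {a..b} \<Longrightarrow> \<bar>g x - avg g a b\<bar> \<le> M"
    and "0 < r" and "a < b"
  shows "joint_osc r f g a b \<le> M * osc r f a b"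
proof -
  have "0 \<le> M"
    using le[of a] \<open>a < b\<close> by simp
  have "bounded ((\<lambda>_. M) ` {a..b})"
    by (auto simp: bounded_real)
  then have "joint_osc r f g a b \<le> power_mean r (\<lambda>x. M * \<bar>f x - avg f a b\<bar>) a b"
    unfolding joint_osc_eq_power_mean using assms \<open>0 \<le> M\<close>
    by (intro power_mean_mono bounded_mult_comp bounded_abs_sub_comp)
       (auto simp: mult.commute[of M] intro: mult_left_mono)
  also have "\<dots> = M * osc r f a b"
    unfolding osc_eq_power_mean using \<open>0 \<le> M\<close> \<open>0 < r\<close> \<open>a < b\<close> by (simp add: power_mean_cmult)
  finally show ?thesis .
qed

lemma osc_ge_on_subinterval:
  assumes [measurable]: "f \<in> borel_measurable borel" and "bounded (f ` {a..b})"
    and "a \<le> p" "p \<le> q" "q \<le> b"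
    and "\<And>x. x \<in> {p..q} \<Longrightarrow> m \<le> \<bar>f x - avg f a b\<bar>"
    and "0 \<le> m" and "0 < r" and "a < b"
  shows "((q - p) / (b - a)) powr (1 / r) * m \<le> osc r f a b"
  unfolding osc_eq_power_mean using assms
  by (intro power_mean_ge_on_subinterval bounded_abs_sub_comp) auto

lemma joint_osc_ge_on_subinterval:
  assumes [measurable]: "f \<in> borel_measurable borel" "g \<in> borel_measurable borel"
    and "bounded (f ` {a..b})" "bounded (g ` {a..b})"
    and "a \<le> p" "p \<le> q" "q \<le> b"
    and "\<And>x. x \<in> {p..q} \<Longrightarrow> m \<le> \<bar>f x - avg f a b\<bar>"
    and "\<And>x. x \<in> {p..q} \<Longrightarrow> n \<le> \<bar>g x - avg g a b\<bar>"
    and "0 \<le> m" "0 \<le> n" and "0 < r" and "a < b"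
  shows "((q - p) / (b - a)) powr (1 / r) * (m * n) \<le> joint_osc r f g a b"
  unfolding joint_osc_eq_power_mean using assms
  by (intro power_mean_ge_on_subinterval bounded_mult_comp bounded_abs_sub_comp mult_mono) auto

lemma osc2_le_sqrt_mean_sq:
  assumes [measurable]: "f \<in> borel_measurable borel" and "bounded (f ` {a..b})" and "a < b"
  shows "osc 2 f a b \<le> sqrt (integral {a..b} (\<lambda>x. f x ^ 2) / (b - a))"
proof -
  have "bounded ((\<lambda>x. f x ^ 2) ` {a..b})"
    using bounded_mult_comp[OF assms(2) assms(2)] by (simp add: power2_eq_square)
  then have "(\<lambda>x. f x ^ 2) integrable_on {a..b}"
    by (intro bounded_borel_integral_Icc) auto
  then have "integral {a..b} (\<lambda>x. \<bar>f x - avg f a b\<bar> ^ 2) \<le> integral {a..b} (\<lambda>x. f x ^ 2)"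
    using integral_sq_sub_mean_le[OF bounded_borel_integral_Icc(1)[OF assms(1,2)]] \<open>a < b\<close>
    by (simp add: avg_eq_integral[OF assms(1,2)])
  then show ?thesis
    unfolding osc_eq_power_mean using assms
    by (subst power_mean_two) (auto intro!: bounded_abs_sub_comp divide_right_mono)
qed

section \<open>The sine wave\<close>

definition wave :: "real \<Rightarrow> real" where
  "wave x = sin (2 * pi * x)"

lemma wave_measurable [measurable]: "wave \<in> borel_measurable borel"
  unfolding wave_def by measurable

lemma abs_wave_le_1: "\<bar>wave x\<bar> \<le> 1"
  unfolding wave_def by simp

lemma bounded_wave: "bounded (wave ` S)"
  using abs_wave_le_1 by (auto simp: bounded_real)

lemma abs_wave_diff_le: "\<bar>wave x - wave y\<bar> \<le> 2 * pi * \<bar>x - y\<bar>"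
proof -
  have "(2 * pi * x - 2 * pi * y) / 2 = pi * (x - y)" and "(2 * pi * x + 2 * pi * y) / 2 = pi * (x + y)"
    by (simp_all add: field_simps)
  then have "\<bar>wave x - wave y\<bar> = 2 * \<bar>sin (pi * (x - y))\<bar> * \<bar>cos (pi * (x + y))\<bar>"
    unfolding wave_def sin_diff_sin by (simp add: abs_mult)
  also have "\<dots> \<le> 2 * \<bar>pi * (x - y)\<bar> * 1"
    by (intro mult_mono abs_sin_x_le_abs_x) auto
  finally show ?thesis
    by (simp add: abs_mult)
qed

lemma abs_wave_sub_avg_le:
  assumes "a < b" and "x \<in> {a..b}"
  shows "\<bar>wave x - avg wave a b\<bar> \<le> min 2 (2 * pi * (b - a))"
proof -
  have "\<bar>wave x - wave y\<bar> \<le> min 2 (2 * pi * (b - a))" if "y \<in> {a..b}" for y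
  proof -
    have "2 * pi * \<bar>x - y\<bar> \<le> 2 * pi * (b - a)"
      using assms(2) that by (intro mult_left_mono) auto
    then show ?thesis
      using abs_wave_diff_le[of x y] abs_wave_le_1[of x] abs_wave_le_1[of y] by linarith
  qed
  then show ?thesis
    using abs_sub_mean_le bounded_borel_integral_Icc(1) avg_eq_integral bounded_wave \<open>a < b\<close>
    by (metis wave_measurable)
qed

lemma avg_wave_unit_interval: "avg wave a (a + 1) = 0"
proof -
  define F where "F x = - cos (2 * pi * x) / (2 * pi)" for x
  have "(wave has_integral (F (a + 1) - F a)) {a..a + 1}"
  proof (rule fundamental_theorem_of_calculus)
    fix x
    have "(F has_real_derivative wave x) (at x within {a..a + 1})"
      unfolding F_def wave_def by (auto intro!: derivative_eq_intros)
    then show "(F has_vector_derivative wave x) (at x within {a..a + 1})"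
      by (simp add: has_real_derivative_iff_has_vector_derivative)
  qed simp
  moreover have "F (a + 1) = F a"
    unfolding F_def by (simp add: distrib_left)
  ultimately show ?thesis
    by (simp add: avg_eq_integral bounded_wave integral_unique)
qed

lemma wave_ge_half:
  fixes k :: int
  assumes "k + 1/6 \<le> x" and "x \<le> k + 1/3"
  shows "1/2 \<le> wave x"
proof -
  define t where "t = x - k"
  have "wave x = sin (2 * pi * t + 2 * pi * real_of_int k)"
    unfolding wave_def t_def by (simp add: algebra_simps)
  also have "\<dots> = sin (2 * pi * t)"
    by (simp add: sin_add)
  also have "\<dots> = cos \<bar>pi / 2 - 2 * pi * t\<bar>"
    by (simp add: sin_cos_eq)
  finally have "wave x = cos \<bar>pi / 2 - 2 * pi * t\<bar>" .
  moreover have "pi * (1/6) \<le> pi * t" and "pi * t \<le> pi * (1/3)"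
    using assms unfolding t_def by (simp_all add: mult_left_mono)
  then have "\<bar>pi / 2 - 2 * pi * t\<bar> \<le> pi / 3"
    unfolding abs_le_iff by linarith
  then have "cos (pi / 3) \<le> cos \<bar>pi / 2 - 2 * pi * t\<bar>"
    by (intro cos_monotone_0_pi_le) auto
  ultimately show ?thesis
    by (simp add: cos_60)
qed

section \<open>The spikes\<close>

definition spike_height :: "int \<Rightarrow> real" where
  "spike_height k = sqrt (k + 8)"

(* The shift by 8 keeps the spike centred at k + 1/4 inside [k + 1/6, k + 1/3],
   where the wave is at least 1/2. *)
definition spike_width :: "int \<Rightarrow> real" where
  "spike_width k = 1 / (k + 8)"

definition spikes :: "real \<Rightarrow> real" where
  "spikes x = (if 1 \<le> \<lfloor>x\<rfloor> \<and> \<bar>x - \<lfloor>x\<rfloor> - 1/4\<bar> \<le> spike_width \<lfloor>x\<rfloor> / 2 then spike_height \<lfloor>x\<rfloor> else 0)"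

lemma spikes_measurable [measurable]: "spikes \<in> borel_measurable borel"
  unfolding spikes_def spike_height_def spike_width_def by measurable

lemma spike_width_bounds: "1 \<le> k \<Longrightarrow> 0 < spike_width k \<and> spike_width k \<le> 1/9"
  unfolding spike_width_def by (auto simp: field_simps)

lemma spike_height_ge_3:
  assumes "1 \<le> k"
  shows "3 \<le> spike_height k"
proof -
  have "sqrt 9 \<le> sqrt (k + 8)"
    using assms by (intro real_sqrt_le_mono) simp
  then show ?thesis
    unfolding spike_height_def by simp
qed

lemma spike_width_mult_height_sq: "1 \<le> k \<Longrightarrow> spike_width k * spike_height k ^ 2 = 1"
  unfolding spike_width_def spike_height_def by simp

lemma spike_width_powr_mult_height:
  assumes "1 \<le> k" and "0 < r"
  shows "spike_width k powr (1 / r) * spike_height k = (real_of_int k + 8) powr (1/2 - 1 / r)"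
proof -
  have pos: "0 < real_of_int k + 8"
    using assms by simp
  then have "spike_width k powr (1 / r) = 1 / (real_of_int k + 8) powr (1 / r)"
    unfolding spike_width_def by (simp add: powr_divide)
  moreover have "spike_height k = (real_of_int k + 8) powr (1/2)"
    unfolding spike_height_def using pos by (simp add: powr_half_sqrt)
  ultimately show ?thesis
    by (simp add: powr_diff)
qed

lemma spike_bounds:
  assumes "1 \<le> k"
  shows "real_of_int k + 1/6 \<le> real_of_int k + 1/4 - spike_width k / 2"
    and "real_of_int k + 1/4 + spike_width k / 2 \<le> real_of_int k + 1/3"
  using spike_width_bounds[OF assms] by auto

lemma bounded_spikes: "bounded (spikes ` {a..b})"
proof -
  have "\<bar>spikes x\<bar> \<le> sqrt (\<bar>a\<bar> + \<bar>b\<bar> + 8)" if "x \<in> {a..b}" for x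
  proof -
    have "real_of_int \<lfloor>x\<rfloor> + 8 \<le> \<bar>a\<bar> + \<bar>b\<bar> + 8"
      using that of_int_floor_le[of x] abs_ge_self[of b] abs_ge_zero[of a]
      unfolding atLeastAtMost_iff by linarith
    then show ?thesis
      unfolding spikes_def spike_height_def by (auto intro: real_sqrt_le_mono)
  qed
  then show ?thesis
    unfolding bounded_real by blast
qed

lemma spikes_on_unit_interval:
  fixes k :: int and x :: real
  assumes "real_of_int k \<le> x" and "x \<le> real_of_int k + 1"
  shows "spikes x = (if 1 \<le> k \<and> \<bar>x - k - 1/4\<bar> \<le> spike_width k / 2 then spike_height k else 0)"
proof (cases "x < k + 1")
  case True
  then have "\<lfloor>x\<rfloor> = k"
    using assms by (intro floor_unique) auto
  then show ?thesis
    unfolding spikes_def by simp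
next
  case False
  then have x: "x = k + 1"
    using assms by simp
  then show ?thesis
    unfolding spikes_def using spike_width_bounds[of k] spike_width_bounds[of "k + 1"] by auto
qed

lemma spikes_eq_spike_height:
  assumes "1 \<le> k" and "\<bar>x - k - 1/4\<bar> \<le> spike_width k / 2"
  shows "spikes x = spike_height k"
proof -
  have "real_of_int k \<le> x" and "x \<le> real_of_int k + 1"
    using assms(2) spike_width_bounds[OF assms(1)] unfolding abs_le_iff by auto
  then show ?thesis
    using assms by (simp add: spikes_on_unit_interval[of k])
qed

lemma spikes_sq_integrable: "(\<lambda>x. spikes x ^ 2) integrable_on {a..b}"
  using bounded_mult_comp[OF bounded_spikes bounded_spikes]
  by (intro bounded_borel_integral_Icc) (auto simp: power2_eq_square)

lemma integral_spikes_sq_unit_interval_le: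
  fixes k :: int
  shows "integral {real_of_int k..real_of_int k + 1} (\<lambda>x. spikes x ^ 2) \<le> 1"
proof (cases "1 \<le> k")
  case False
  then have "integral {real_of_int k..real_of_int k + 1} (\<lambda>x. spikes x ^ 2) = integral {real_of_int k..real_of_int k + 1} (\<lambda>x. 0)"
    by (intro integral_cong) (auto simp: spikes_on_unit_interval[of k])
  then show ?thesis
    by simp
next
  case True
  define p where "p = k + 1/4 - spike_width k / 2"
  define q where "q = k + 1/4 + spike_width k / 2"
  have sub: "{p..q} \<subseteq> {real_of_int k..real_of_int k + 1}"
    using spike_width_bounds[OF True] unfolding p_def q_def by auto
  define g where "g x = (if x \<in> {p..q} then spike_height k ^ 2 else 0)" for x
  have "integral {real_of_int k..real_of_int k + 1} (\<lambda>x. spikes x ^ 2) \<le> integral {real_of_int k..real_of_int k + 1} g"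
  proof (rule integral_le[OF spikes_sq_integrable])
    show "g integrable_on {real_of_int k..real_of_int k + 1}"
      unfolding g_def integrable_restrict_Int Int_absorb2[OF sub] by (rule integrable_const_ivl)
    show "spikes x ^ 2 \<le> g x" if "x \<in> {real_of_int k..real_of_int k + 1}" for x
    proof (cases "x \<in> {p..q}")
      case True
      then show ?thesis
        using that by (auto simp: spikes_on_unit_interval[of k] g_def)
    next
      case False
      then have "\<not> \<bar>x - k - 1/4\<bar> \<le> spike_width k / 2"
        unfolding p_def q_def atLeastAtMost_iff abs_le_iff by arith
      then show ?thesis
        using that by (simp add: spikes_on_unit_interval[of k] g_def)
    qed
  qed
  also have "\<dots> = spike_width k * spike_height k ^ 2"
    unfolding g_def integral_restrict_Int Int_absorb2[OF sub]
    using spike_width_bounds[OF True] by (simp add: p_def q_def)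
  finally show ?thesis
    using spike_width_mult_height_sq[OF True] by simp
qed

lemma integral_spikes_sq_le:
  assumes "a < b"
  shows "integral {a..b} (\<lambda>x. spikes x ^ 2) \<le> b - a + 2"
proof -
  have cells: "integral {real_of_int m..real_of_int m + real n} (\<lambda>x. spikes x ^ 2) \<le> n" for m :: int and n :: nat
  proof (induction n)
    case (Suc n)
    have "integral {real_of_int m..real_of_int m + real (Suc n)} (\<lambda>x. spikes x ^ 2)
        = integral {real_of_int m..real_of_int m + real n} (\<lambda>x. spikes x ^ 2)
          + integral {of_int (m + int n)..of_int (m + int n) + 1} (\<lambda>x. spikes x ^ 2)"
      using Henstock_Kurzweil_Integration.integral_combine[where a = m and c = "m + real n"
          and b = "m + real n + 1" and f = "\<lambda>x. spikes x ^ 2"] spikes_sq_integrable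
      by (simp add: add.assoc add.commute[of 1])
    then show ?case
      using Suc.IH integral_spikes_sq_unit_interval_le[of "m + int n"] by simp
  qed simp
  define n where "n = nat (\<lfloor>b\<rfloor> + 1 - \<lfloor>a\<rfloor>)"
  have n: "real n = \<lfloor>b\<rfloor> + 1 - \<lfloor>a\<rfloor>"
    using floor_mono[of a b] \<open>a < b\<close> unfolding n_def by simp
  then have "{a..b} \<subseteq> {\<lfloor>a\<rfloor>..\<lfloor>a\<rfloor> + real n}"
    by auto
  then have "integral {a..b} (\<lambda>x. spikes x ^ 2) \<le> integral {\<lfloor>a\<rfloor>..\<lfloor>a\<rfloor> + real n} (\<lambda>x. spikes x ^ 2)"
    by (intro integral_subset_le spikes_sq_integrable) auto
  also have "\<dots> \<le> n"
    by (rule cells)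
  also have "\<dots> \<le> b - a + 2"
    using n by linarith
  finally show ?thesis .
qed

lemma integral_spikes_unit_interval_le:
  assumes "1 \<le> k"
  shows "integral {real_of_int k..real_of_int k + 1} spikes \<le> spike_height k / 2"
proof -
  have spikes_int: "spikes integrable_on {a..b}" for a b
    using bounded_borel_integral_Icc(1) bounded_spikes by simp
  have "integral {real_of_int k..real_of_int k + 1} spikes = integral {real_of_int k..real_of_int k + 1/2} spikes + integral {real_of_int k + 1/2..real_of_int k + 1} spikes"
    using Henstock_Kurzweil_Integration.integral_combine[where a = k and c = "k + 1/2"
        and b = "k + 1" and f = spikes] spikes_int by simp
  also have "integral {real_of_int k..real_of_int k + 1/2} spikes \<le> integral {real_of_int k..real_of_int k + 1/2} (\<lambda>_. spike_height k)"
    using spikes_int spike_height_ge_3[OF assms]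
    by (intro integral_le) (auto simp: spikes_on_unit_interval)
  also have "integral {real_of_int k + 1/2..real_of_int k + 1} spikes
      \<le> integral {real_of_int k + 1/2..real_of_int k + 1} (\<lambda>_. 0)"
  proof (intro integral_le spikes_int integrable_const_ivl)
    fix x
    assume x: "x \<in> {real_of_int k + 1/2..real_of_int k + 1}"
    then have "\<not> \<bar>x - k - 1/4\<bar> \<le> spike_width k / 2"
      using spike_width_bounds[OF assms] unfolding atLeastAtMost_iff abs_le_iff by arith
    then show "spikes x \<le> 0"
      using x by (simp add: spikes_on_unit_interval[of k])
  qed
  finally show ?thesis
    by simp
qed

section \<open>Exponent 2\<close>

lemma sqrt_mult_min_le_4_pi:
  assumes "0 < L"
  shows "sqrt ((L + 2) / L) * min 2 (2 * pi * L) \<le> 4 * pi"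
proof (rule power2_le_imp_le)
  have "(sqrt ((L + 2) / L) * min 2 (2 * pi * L)) ^ 2 = (L + 2) / L * min 2 (2 * pi * L) ^ 2"
    using assms by (simp add: power_mult_distrib)
  also have "\<dots> \<le> 12 * pi ^ 2"
  proof (cases "L \<le> 1")
    case True
    have "min 2 (2 * pi * L) ^ 2 \<le> (2 * pi * L) ^ 2"
      using assms by (intro power_mono) auto
    then have "(L + 2) / L * min 2 (2 * pi * L) ^ 2 \<le> (L + 2) / L * (2 * pi * L) ^ 2"
      using assms by (intro mult_left_mono) auto
    also have "\<dots> = 4 * pi ^ 2 * (L * (L + 2))"
      using assms by (simp add: field_simps power2_eq_square)
    also have "\<dots> \<le> 4 * pi ^ 2 * 3"
      using True assms by (intro mult_left_mono) (auto intro: order.trans[OF mult_mono[of L 1 "L + 2" 3]])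
    finally show ?thesis
      by simp
  next
    case False
    have "min 2 (2 * pi * L) ^ 2 \<le> 2 ^ 2"
      using assms by (intro power_mono) auto
    moreover have "(L + 2) / L \<le> 3"
      using False by (simp add: field_simps)
    ultimately have "(L + 2) / L * min 2 (2 * pi * L) ^ 2 \<le> 3 * 2 ^ 2"
      using assms by (intro mult_mono) auto
    also have "\<dots> \<le> 12 * pi ^ 2"
      using pi_gt3 by (simp add: one_le_power)
    finally show ?thesis .
  qed
  also have "\<dots> \<le> (4 * pi) ^ 2"
    by (simp add: power_mult_distrib)
  finally show "(sqrt ((L + 2) / L) * min 2 (2 * pi * L)) ^ 2 \<le> (4 * pi) ^ 2" .
qed simp

lemma osc2_spikes_le:
  assumes "a < b"
  shows "osc 2 spikes a b \<le> sqrt ((b - a + 2) / (b - a))"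
  using osc2_le_sqrt_mean_sq[OF spikes_measurable bounded_spikes assms] integral_spikes_sq_le[OF assms] assms
  by (meson divide_right_mono diff_ge_0_iff_ge less_imp_le order.trans real_sqrt_le_mono)

lemma osc_wave_le:
  assumes "0 < r" and "a < b"
  shows "osc r wave a b \<le> min 2 (2 * pi * (b - a))"
  using assms abs_wave_sub_avg_le by (intro osc_le_if_abs_sub_avg_le) (auto simp: bounded_wave)

lemma joint_osc_spikes_wave_le:
  assumes "0 < r" and "a < b"
  shows "joint_osc r spikes wave a b \<le> min 2 (2 * pi * (b - a)) * osc r spikes a b"
  using assms abs_wave_sub_avg_le
  by (intro joint_osc_le_if_abs_sub_avg_le) (auto simp: bounded_wave bounded_spikes)

lemma osc2_spikes_mult_osc2_wave_le:
  assumes "a < b"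
  shows "osc 2 spikes a b * osc 2 wave a b \<le> 4 * pi"
proof -
  have "osc 2 spikes a b * osc 2 wave a b \<le> sqrt ((b - a + 2) / (b - a)) * min 2 (2 * pi * (b - a))"
    using osc2_spikes_le[OF assms] osc_wave_le[of 2, OF _ assms] assms
    by (intro mult_mono) (auto simp: osc_nonneg)
  also have "\<dots> \<le> 4 * pi"
    using assms by (intro sqrt_mult_min_le_4_pi) simp
  finally show ?thesis .
qed

lemma joint_osc2_spikes_wave_le:
  assumes "a < b"
  shows "joint_osc 2 spikes wave a b \<le> 4 * pi"
proof -
  have "joint_osc 2 spikes wave a b \<le> min 2 (2 * pi * (b - a)) * sqrt ((b - a + 2) / (b - a))"
  proof -
    have "min 2 (2 * pi * (b - a)) * osc 2 spikes a b \<le> min 2 (2 * pi * (b - a)) * sqrt ((b - a + 2) / (b - a))"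
      using osc2_spikes_le[OF assms] assms by (intro mult_left_mono) auto
    then show ?thesis
      using joint_osc_spikes_wave_le[of 2, OF _ assms] by simp
  qed
  also have "\<dots> \<le> 4 * pi"
    using assms sqrt_mult_min_le_4_pi[of "b - a"] by (simp add: mult.commute)
  finally show ?thesis .
qed

section \<open>Exponents above 2\<close>

lemma abs_spikes_sub_avg_ge:
  fixes k :: int
  assumes "1 \<le> k"
    and "x \<in> {real_of_int k + 1/4 - spike_width k / 2..real_of_int k + 1/4 + spike_width k / 2}"
  shows "spike_height k / 2 \<le> \<bar>spikes x - avg spikes (real_of_int k) (real_of_int k + 1)\<bar>"
proof -
  have "\<bar>x - real_of_int k - 1/4\<bar> \<le> spike_width k / 2"
    using assms(2) unfolding atLeastAtMost_iff abs_le_iff by linarith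
  then have "spikes x = spike_height k"
    by (rule spikes_eq_spike_height[OF assms(1)])
  moreover have "avg spikes (real_of_int k) (real_of_int k + 1) \<le> spike_height k / 2"
    using integral_spikes_unit_interval_le[OF assms(1)] by (simp add: avg_eq_integral bounded_spikes)
  ultimately show ?thesis
    by (simp add: abs_if)
qed

lemma abs_wave_sub_avg_ge:
  fixes k :: int
  assumes "x \<in> {real_of_int k + 1/6..real_of_int k + 1/3}"
  shows "1/2 \<le> \<bar>wave x - avg wave (real_of_int k) (real_of_int k + 1)\<bar>"
  using wave_ge_half[of k x] assms by (simp add: avg_wave_unit_interval)

lemma osc_spikes_unit_interval_ge:
  assumes "1 \<le> k" and "0 < r"
  shows "spike_width k powr (1 / r) * (spike_height k / 2) \<le> osc r spikes (real_of_int k) (real_of_int k + 1)"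
  using osc_ge_on_subinterval[OF spikes_measurable bounded_spikes,
      of "real_of_int k" "real_of_int k + 1/4 - spike_width k / 2"
      "real_of_int k + 1/4 + spike_width k / 2" "real_of_int k + 1" "spike_height k / 2" r]
    spike_bounds[OF assms(1)] spike_width_bounds[OF assms(1)] spike_height_ge_3[OF assms(1)]
    abs_spikes_sub_avg_ge[OF assms(1)] assms
  by simp

lemma osc_wave_unit_interval_ge:
  fixes k :: int
  assumes "1 \<le> r"
  shows "1/12 \<le> osc r wave (real_of_int k) (real_of_int k + 1)"
proof -
  have "(1/6 :: real) powr 1 \<le> (1/6) powr (1 / r)"
    using assms by (intro powr_mono') auto
  then have "1/12 \<le> ((real_of_int k + 1/3 - (real_of_int k + 1/6)) / (real_of_int k + 1 - real_of_int k))
      powr (1 / r) * (1/2)"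
    by simp
  also have "\<dots> \<le> osc r wave (real_of_int k) (real_of_int k + 1)"
    using abs_wave_sub_avg_ge assms
    by (intro osc_ge_on_subinterval) (auto simp: bounded_wave)
  finally show ?thesis .
qed

lemma joint_osc_spikes_wave_unit_interval_ge:
  assumes "1 \<le> k" and "0 < r"
  shows "spike_width k powr (1 / r) * (spike_height k / 4)
    \<le> joint_osc r spikes wave (real_of_int k) (real_of_int k + 1)"
proof -
  have "spike_width k powr (1 / r) * (spike_height k / 4)
      = ((real_of_int k + 1/4 + spike_width k / 2 - (real_of_int k + 1/4 - spike_width k / 2))
          / (real_of_int k + 1 - real_of_int k)) powr (1 / r) * (spike_height k / 2 * (1/2))"
    by simp
  also have "\<dots> \<le> joint_osc r spikes wave (real_of_int k) (real_of_int k + 1)"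
    using spike_bounds[OF assms(1)] spike_height_ge_3[OF assms(1)] spike_width_bounds[OF assms(1)]
      abs_spikes_sub_avg_ge[OF assms(1)] abs_wave_sub_avg_ge[of _ k] assms
    by (intro joint_osc_ge_on_subinterval) (auto simp: bounded_spikes bounded_wave)
  finally show ?thesis .
qed

lemma unit_interval_lower_bounds:
  assumes "1 \<le> k" and "1 \<le> r"
  shows "(real_of_int k + 8) powr (1/2 - 1 / r) / 24
      \<le> osc r spikes (real_of_int k) (real_of_int k + 1) * osc r wave (real_of_int k) (real_of_int k + 1)"
    and "(real_of_int k + 8) powr (1/2 - 1 / r) / 24
      \<le> joint_osc r spikes wave (real_of_int k) (real_of_int k + 1)"
proof -
  have r: "0 < r"
    using assms(2) by simp
  note e = spike_width_powr_mult_height[OF assms(1) r, symmetric]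
  have "spike_width k powr (1 / r) * (spike_height k / 2) * (1/12)
      \<le> osc r spikes (real_of_int k) (real_of_int k + 1) * osc r wave (real_of_int k) (real_of_int k + 1)"
    using osc_spikes_unit_interval_ge[OF assms(1) r] osc_wave_unit_interval_ge[OF assms(2)]
      spike_height_ge_3[OF assms(1)]
    by (intro mult_mono) (auto simp: osc_nonneg)
  then show "(real_of_int k + 8) powr (1/2 - 1 / r) / 24
      \<le> osc r spikes (real_of_int k) (real_of_int k + 1) * osc r wave (real_of_int k) (real_of_int k + 1)"
    unfolding e by simp
  have "spike_width k powr (1 / r) * spike_height k / 24 \<le> spike_width k powr (1 / r) * (spike_height k / 4)"
    using spike_height_ge_3[OF assms(1)] by (simp add: mult_left_mono)
  then show "(real_of_int k + 8) powr (1/2 - 1 / r) / 24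
      \<le> joint_osc r spikes wave (real_of_int k) (real_of_int k + 1)"
    unfolding e using joint_osc_spikes_wave_unit_interval_ge[OF assms(1) r] by linarith
qed

lemma SUP_intervals_eq_infinity:
  fixes F :: "real \<times> real \<Rightarrow> real"
  assumes "0 < e"
    and "\<And>k. 1 \<le> k \<Longrightarrow> (real_of_int k + 8) powr e / 24 \<le> F (real_of_int k, real_of_int k + 1)"
  shows "(SUP I \<in> {(a, b). a < b}. ereal (F I)) = \<infinity>"
proof (rule SUP_PInfty)
  fix n :: nat
  have "filterlim (\<lambda>m::nat. (real m + 9) powr e / 24) at_top sequentially"
    using \<open>0 < e\<close> by real_asymp
  then have "\<forall>\<^sub>F m in sequentially. real n \<le> (real m + 9) powr e / 24"
    unfolding filterlim_at_top by blast
  then obtain m :: nat where "real n \<le> (real m + 9) powr e / 24"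
    by (meson eventually_sequentially order.refl)
  also have "\<dots> \<le> F (real_of_int (int m + 1), real_of_int (int m + 1) + 1)"
    using assms(2)[of "int m + 1"] by (simp add: add.assoc)
  finally show "\<exists>I \<in> {(a, b). a < b}. ereal (real n) \<le> ereal (F I)"
    by (intro bexI[of _ "(real_of_int (int m + 1), real_of_int (int m + 1) + 1)"]) auto
qed

theorem corollary4p6:
  shows "\<exists>b1 b2. Linf_loc b1 \<and> Linf_loc b2 \<and>
           S_r 2 b1 b2 < \<infinity> \<and> T_r 2 b1 b2 < \<infinity> \<and>
           (\<forall>\<epsilon>>0. S_r (2 + \<epsilon>) b1 b2 = \<infinity> \<and> T_r (2 + \<epsilon>) b1 b2 = \<infinity>)"
proof (intro exI conjI allI impI)
  show "Linf_loc spikes" and "Linf_loc wave"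
    by (simp_all add: Linf_locI bounded_spikes bounded_wave)
  have "S_r 2 spikes wave \<le> ereal (4 * pi)"
    unfolding S_r_def by (rule SUP_least) (auto intro: osc2_spikes_mult_osc2_wave_le)
  then show "S_r 2 spikes wave < \<infinity>"
    by (rule le_less_trans) simp
  have "T_r 2 spikes wave \<le> ereal (4 * pi)"
    unfolding T_r_eq_SUP_joint_osc by (rule SUP_least) (auto intro: joint_osc2_spikes_wave_le)
  then show "T_r 2 spikes wave < \<infinity>"
    by (rule le_less_trans) simp
next
  fix \<epsilon> :: real
  assume "0 < \<epsilon>"
  then have e: "0 < 1/2 - 1 / (2 + \<epsilon>)" and r: "1 \<le> 2 + \<epsilon>"
    by (simp_all add: field_simps)
  show "S_r (2 + \<epsilon>) spikes wave = \<infinity>"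
    unfolding S_r_def using unit_interval_lower_bounds(1)[OF _ r]
    by (intro SUP_intervals_eq_infinity[OF e]) simp
  show "T_r (2 + \<epsilon>) spikes wave = \<infinity>"
    unfolding T_r_eq_SUP_joint_osc using unit_interval_lower_bounds(2)[OF _ r]
    by (intro SUP_intervals_eq_infinity[OF e]) simp
qed

end
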